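(* For every $C$-pseudo-cone $E$ and every $r\in(-\infty,0)\cup(0,1)$, the $r$-th dual volume $\widetilde{V}_r(E)=\frac{1}{n}\int_{\Omega_C}\rho_E(u)^r\,du$ is finite.
   Context: $C\subset\mathbb{R}^n$ ($n\ge2$) is a pointed closed convex cone with nonempty interior; $\Omega_C=\mathbb{S}^{n-1}\cap\operatorname{int}C$, with spherical Lebesgue measure $du$. A $C$-pseudo-cone is a nonempty closed convex set $E$ with $o\notin E$, $\lambda x\in E$ for all $x\in E,\lambda\ge1$, and recession cone equal to $C$. $\rho_E(u)=\min\{r>0:ru\in E\}$. *)

theory Defs
  imports "HOL-Analysis.Analysis"
begin

definition pointed_cc_cone :: "'a::euclidean_space set \<Rightarrow> bool" where
  "pointed_cc_cone C \<longleftrightarrow> C \<noteq> {} \<and> cone C \<and> convex C \<and> closed C \<and>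
     C \<inter> uminus ` C = {0} \<and> interior C \<noteq> {}"

definition rec_cone :: "'a::euclidean_space set \<Rightarrow> 'a set" where
  "rec_cone E = {y. \<forall>x\<in>E. \<forall>t::real. t \<ge> 0 \<longrightarrow> x + t *\<^sub>R y \<in> E}"

definition C_pseudo_cone :: "'a::euclidean_space set \<Rightarrow> 'a set \<Rightarrow> bool" where
  "C_pseudo_cone C E \<longleftrightarrow> E \<noteq> {} \<and> closed E \<and> convex E \<and> 0 \<notin> E \<and>
     (\<forall>x\<in>E. \<forall>l::real. l \<ge> 1 \<longrightarrow> l *\<^sub>R x \<in> E) \<and> rec_cone E = C"

definition Omega :: "'a::euclidean_space set \<Rightarrow> 'a set" where
  "Omega C = sphere 0 1 \<inter> interior C"

definition radial :: "'a::euclidean_space set \<Rightarrow> 'a \<Rightarrow> real" where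
  "radial E u = Inf {r. r > 0 \<and> r *\<^sub>R u \<in> E}"

text \<open>Spherical Lebesgue measure (surface area measure on the unit sphere), realised as
  the cone-measure construction: sigma(A) = n * lambda({t x. x \<in> A, 0 < t \<le> 1}),
  i.e. n times the push-forward of Lebesgue measure on the unit ball under x \<mapsto> x/|x|.
  (The point 0 is a Lebesgue null set, so the measure is concentrated on the sphere.)\<close>
definition sphere_measure :: "'a::euclidean_space measure" where
  "sphere_measure = density
     (distr (restrict_space lborel (ball 0 1)) borel (\<lambda>x. x /\<^sub>R norm x))
     (\<lambda>_. ennreal (real DIM('a)))"

definition dual_volume :: "'a::euclidean_space set \<Rightarrow> real \<Rightarrow> 'a set \<Rightarrow> ennreal" where
  "dual_volume C r E = ennreal (1 / real DIM('a)) *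
     (\<integral>\<^sup>+ u\<in>Omega C. ennreal (radial E u powr r) \<partial>sphere_measure)"

end

theory Submission
  imports Defs
begin

text \<open>Fix \<open>e\<close> in the interior of \<open>C\<close>. Since \<open>E + C \<subseteq> E\<close>, there is \<open>c > 0\<close> with
  \<open>\<rho>\<^sub>E(u) \<le> c / h\<close> whenever \<open>u - h e \<in> C\<close>; moreover \<open>\<rho>\<^sub>E\<close> is bounded below by the distance from
  \<open>0\<close> to \<open>E\<close>, which settles \<open>r < 0\<close>. For \<open>0 < r < 1\<close>, \<open>\<rho>\<^sub>E(u)\<^sup>r\<close> is at most \<open>(c 2\<^sup>k\<^sup>+\<^sup>1)\<^sup>r\<close>
  on the layer of directions with \<open>u - 2\<^sup>-\<^sup>k e \<notin> C\<close>. The part of the unit ball lying over this layer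
  has \<open>2\<^sup>k\<close> pairwise disjoint translates by multiples of \<open>2\<^sup>-\<^sup>k e\<close> inside a fixed ball, so the layer
  has spherical measure \<open>O(2\<^sup>-\<^sup>k)\<close>, and \<open>\<Sum>\<^sub>k 2\<^sup>k\<^sup>r 2\<^sup>-\<^sup>k\<close> converges because \<open>r < 1\<close>.\<close>

lemma convex_cone_if_pointed_cc_cone: "pointed_cc_cone C \<Longrightarrow> convex_cone C"
  by (auto simp: pointed_cc_cone_def convex_cone_def conic_def cone_def)

lemma convex_cone_diff_scaleR_mono:
  assumes "convex_cone C" "e \<in> C" "u - h *\<^sub>R e \<in> C" "0 \<le> h'" "h' \<le> h"
  shows "u - h' *\<^sub>R e \<in> C"
proof -
  have "(u - h *\<^sub>R e) + (h - h') *\<^sub>R e \<in> C"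
    using assms by (intro convex_cone_add convex_cone_scaleR) auto
  then show ?thesis by (simp add: algebra_simps)
qed

lemma interior_diff_scaleR:
  fixes u e :: "'a::real_normed_vector"
  assumes "u \<in> interior C"
  obtains h where "h > 0" "u - h *\<^sub>R e \<in> C"
proof -
  obtain \<delta> where "\<delta> > 0" "ball u \<delta> \<subseteq> C"
    using assms by (auto simp: mem_interior)
  moreover define h where "h = \<delta> / (norm e + 1)"
  moreover have "norm (h *\<^sub>R e) < \<delta>"
  proof -
    have pos: "0 < norm e + 1"
      by (simp add: add_nonneg_pos)
    have "\<delta> * norm e < \<delta> * (norm e + 1)"
      using \<open>\<delta> > 0\<close> by simp
    then show ?thesis
      using \<open>\<delta> > 0\<close> by (simp add: h_def pos_divide_less_eq[OF pos])
  qed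
  ultimately show ?thesis
    by (intro that[of h]) (auto simp: dist_norm add_nonneg_pos)
qed

lemma C_pseudo_cone_add_mem:
  assumes "C_pseudo_cone C E" "x \<in> E" "y \<in> C"
  shows "x + y \<in> E"
proof -
  have ray: "\<forall>t::real\<ge>0. x + t *\<^sub>R y \<in> E"
    using assms unfolding C_pseudo_cone_def rec_cone_def by blast
  show ?thesis
    using ray[rule_format, of 1] by simp
qed

lemma C_pseudo_cone_scaleR_mem:
  assumes E: "C_pseudo_cone C E" and C: "convex_cone C" and e: "e \<in> interior C"
  obtains c where "c > 0" "\<And>u h. 0 < h \<Longrightarrow> u - h *\<^sub>R e \<in> C \<Longrightarrow> (c / h) *\<^sub>R u \<in> E"
proof -
  obtain p where p: "p \<in> E"
    using E by (auto simp: C_pseudo_cone_def)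
  obtain h0 where h0: "h0 > 0" "e - h0 *\<^sub>R p \<in> C"
    using interior_diff_scaleR[OF e] .
  define c where "c = 1 / h0"
  have "c > 0" using h0 by (simp add: c_def)
  moreover have "(c / h) *\<^sub>R u \<in> E" if "0 < h" "u - h *\<^sub>R e \<in> C" for u h
  proof -
    have "(c / h) *\<^sub>R (u - h *\<^sub>R e) + c *\<^sub>R (e - h0 *\<^sub>R p) \<in> C"
      using that h0 \<open>c > 0\<close> C by (intro convex_cone_add convex_cone_scaleR) auto
    then have "p + ((c / h) *\<^sub>R (u - h *\<^sub>R e) + c *\<^sub>R (e - h0 *\<^sub>R p)) \<in> E"
      using C_pseudo_cone_add_mem[OF E p] by blast
    moreover have "p + ((c / h) *\<^sub>R (u - h *\<^sub>R e) + c *\<^sub>R (e - h0 *\<^sub>R p)) = (c / h) *\<^sub>R u"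
      using that h0 by (simp add: c_def algebra_simps)
    ultimately show ?thesis by simp
  qed
  ultimately show ?thesis using that by blast
qed

lemma C_pseudo_cone_ray_meets:
  assumes "C_pseudo_cone C E" "convex_cone C" "u \<in> interior C"
  shows "\<exists>t>0. t *\<^sub>R u \<in> E"
proof -
  obtain c where "c > 0" "\<And>v h. 0 < h \<Longrightarrow> v - h *\<^sub>R u \<in> C \<Longrightarrow> (c / h) *\<^sub>R v \<in> E"
    using C_pseudo_cone_scaleR_mem[OF assms] by blast
  moreover have "u - 1 *\<^sub>R u \<in> C"
    using convex_cone_contains_0[OF assms(2)] by simp
  ultimately show ?thesis by force
qed

lemma radial_le: "0 < t \<Longrightarrow> t *\<^sub>R u \<in> E \<Longrightarrow> radial E u \<le> t"
  unfolding radial_def by (rule cInf_lower) (auto intro: bdd_belowI[of _ 0])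

lemma radial_nonneg: "\<exists>t>0. t *\<^sub>R u \<in> E \<Longrightarrow> 0 \<le> radial E u"
  unfolding radial_def by (rule cInf_greatest) auto

lemma radial_lower_bound:
  assumes "closed E" "0 \<notin> E"
  obtains d where "d > 0" "\<And>u. norm u = 1 \<Longrightarrow> \<exists>t>0. t *\<^sub>R u \<in> E \<Longrightarrow> d \<le> radial E u"
proof -
  obtain d where d: "d > 0" "ball 0 d \<inter> E = {}"
    using assms open_contains_ball_eq[of "- E"] by (force simp: open_Compl)
  have "d \<le> radial E u" if "norm u = 1" "\<exists>t>0. t *\<^sub>R u \<in> E" for u
    unfolding radial_def
  proof (rule cInf_greatest)
    fix t assume "t \<in> {r. r > 0 \<and> r *\<^sub>R u \<in> E}"
    then show "d \<le> t" using d that(1) by (force simp: disjoint_iff)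
  qed (use that in auto)
  with d show ?thesis using that by blast
qed

lemma sets_sphere_measure [measurable_cong]: "sets sphere_measure = sets borel"
  by (simp add: sphere_measure_def)

lemma Omega_borel: "Omega C \<in> sets borel"
  unfolding Omega_def by simp

lemma emeasure_sphere_measure:
  fixes A :: "'a::euclidean_space set"
  assumes "A \<in> sets borel"
  shows "emeasure sphere_measure A
    = of_nat DIM('a) * emeasure lborel ((\<lambda>x. x /\<^sub>R norm x) -` A \<inter> ball 0 1)"
proof -
  have "(\<lambda>x::'a. x /\<^sub>R norm x) \<in> restrict_space lborel (ball 0 1) \<rightarrow>\<^sub>M borel"
    by (intro measurable_restrict_space1) measurable
  with assms show ?thesis
    by (simp add: sphere_measure_def emeasure_density_const emeasure_distr
        emeasure_restrict_space space_restrict_space ennreal_of_nat_eq_real_of_nat)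
qed

lemma finite_measure_sphere_measure: "finite_measure sphere_measure"
proof (rule finite_measureI)
  have "emeasure (sphere_measure :: 'a measure) (space sphere_measure)
      = of_nat DIM('a) * emeasure lborel (ball (0::'a) 1)"
    by (simp add: emeasure_sphere_measure sets_sphere_measure[THEN sets_eq_imp_space_eq])
  then show "emeasure (sphere_measure :: 'a::euclidean_space measure) (space sphere_measure) \<noteq> \<infinity>"
    using emeasure_lborel_ball_finite[of "0::'a" 1] by (simp add: ennreal_mult_eq_top_iff)
qed

lemma emeasure_lborel_translate:
  fixes a :: "'a::euclidean_space"
  assumes "A \<in> sets borel"
  shows "emeasure lborel ((+) a -` A) = emeasure lborel A"
  using emeasure_distr[of "(+) a" lborel borel A] assms by (simp add: lborel_distr_plus)

lemma emeasure_cone_boundary_layer_le: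
  fixes C :: "'a::euclidean_space set"
  assumes C: "convex_cone C" "closed C" and e: "e \<in> C" and h: "0 < h" "real N * h \<le> 1"
  shows "of_nat N * emeasure lborel {x \<in> ball 0 1 \<inter> C. x - h *\<^sub>R e \<notin> C}
    \<le> emeasure lborel (ball (0::'a) (1 + norm e))"
proof -
  define D where "D = {x \<in> ball 0 1 \<inter> C. x - h *\<^sub>R e \<notin> C}"
  define T where "T i = (+) (- (real i * h) *\<^sub>R e) -` D" for i :: nat
  have [measurable]: "C \<in> sets borel"
    using C(2) by simp
  have D_borel: "D \<in> sets borel"
    unfolding D_def by measurable
  have T_borel: "T i \<in> sets borel" for i
    using measurable_sets_borel[of "(+) (- (real i * h) *\<^sub>R e)" borel D] D_borel
    by (simp add: T_def)
  have disjoint: "disjoint_family_on T {..<N}"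
  proof -
    have "T i \<inter> T j = {}" if "i < j" for i j
    proof (intro disjoint_iff[THEN iffD2] allI impI notI)
      fix y assume "y \<in> T i" "y \<in> T j"
      then have "y - (real j * h) *\<^sub>R e \<in> C" "y - (real i * h + h) *\<^sub>R e \<notin> C"
        by (auto simp: T_def D_def algebra_simps)
      moreover have "real i * h + h \<le> real j * h"
        using mult_right_mono[of "real i + 1" "real j" h] that h by (simp add: distrib_right)
      moreover have "0 \<le> real i * h + h"
        using h by simp
      ultimately show False
        using convex_cone_diff_scaleR_mono[OF C(1) e] by blast
    qed
    then show ?thesis
      unfolding disjoint_family_on_def by (metis inf_commute linorder_neqE_nat)
  qed
  have covered: "(\<Union>i<N. T i) \<subseteq> ball 0 (1 + norm e)"
  proof (clarify)
    fix i y assume "i < N" "y \<in> T i"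
    then have "norm (y - (real i * h) *\<^sub>R e) < 1"
      by (auto simp: T_def D_def)
    moreover have "real i * h \<le> real N * h"
      using \<open>i < N\<close> h by (simp add: mult_right_mono)
    then have "real i * h \<le> 1"
      using h by linarith
    then have "norm ((real i * h) *\<^sub>R e) \<le> norm e"
      using h by (simp add: mult_left_le_one_le)
    ultimately show "y \<in> ball 0 (1 + norm e)"
      using norm_triangle_sub[of y "(real i * h) *\<^sub>R e"] by simp
  qed
  have "of_nat N * emeasure lborel D = (\<Sum>i<N. emeasure lborel (T i))"
    by (simp add: T_def emeasure_lborel_translate[OF D_borel])
  also have "\<dots> = emeasure lborel (\<Union>i<N. T i)"
    using T_borel disjoint by (intro sum_emeasure) auto
  also have "\<dots> \<le> emeasure lborel (ball (0::'a) (1 + norm e))"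
    using covered by (intro emeasure_mono) auto
  finally show ?thesis
    unfolding D_def .
qed

lemma normalize_preimage_boundary_layer_subset:
  fixes C :: "'a::euclidean_space set"
  assumes C: "convex_cone C" and e: "e \<in> C" and h: "0 \<le> h"
  shows "(\<lambda>x. x /\<^sub>R norm x) -` {u \<in> Omega C. u - h *\<^sub>R e \<notin> C} \<inter> ball 0 1
    \<subseteq> {x \<in> ball 0 1 \<inter> C. x - h *\<^sub>R e \<notin> C}"
proof
  fix x :: 'a
  assume "x \<in> (\<lambda>x. x /\<^sub>R norm x) -` {u \<in> Omega C. u - h *\<^sub>R e \<notin> C} \<inter> ball 0 1"
  then have x: "x /\<^sub>R norm x \<in> Omega C" "x /\<^sub>R norm x - h *\<^sub>R e \<notin> C" "x \<in> ball 0 1"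
    by simp_all
  then have "x \<noteq> 0"
    by (auto simp: Omega_def)
  have u: "x /\<^sub>R norm x \<in> C"
    using x(1) interior_subset by (auto simp: Omega_def)
  have "norm x *\<^sub>R (x /\<^sub>R norm x) \<in> C"
    using convex_cone_scaleR[OF C norm_ge_zero u] .
  then have "x \<in> C"
    using \<open>x \<noteq> 0\<close> by simp
  moreover have "x - h *\<^sub>R e \<notin> C"
  proof
    assume "x - h *\<^sub>R e \<in> C"
    moreover have "norm x * h \<le> h"
      using x(3) h by (simp add: mult_left_le_one_le)
    ultimately have "x - (norm x * h) *\<^sub>R e \<in> C"
      using h convex_cone_diff_scaleR_mono[OF C e] by simp
    then have "inverse (norm x) *\<^sub>R (x - (norm x * h) *\<^sub>R e) \<in> C"
      using C by (simp add: convex_cone_scaleR)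
    moreover have "inverse (norm x) *\<^sub>R (x - (norm x * h) *\<^sub>R e) = x /\<^sub>R norm x - h *\<^sub>R e"
      using \<open>x \<noteq> 0\<close> by (simp add: scaleR_diff_right)
    ultimately show False
      using x(2) by simp
  qed
  ultimately show "x \<in> {x \<in> ball 0 1 \<inter> C. x - h *\<^sub>R e \<notin> C}"
    using x(3) by simp
qed

lemma emeasure_sphere_boundary_layer_le:
  fixes C :: "'a::euclidean_space set"
  assumes C: "convex_cone C" "closed C" and e: "e \<in> C" and h: "0 < h" "real N * h \<le> 1"
  shows "of_nat N * emeasure sphere_measure {u \<in> Omega C. u - h *\<^sub>R e \<notin> C}
    \<le> of_nat DIM('a) * emeasure lborel (ball (0::'a) (1 + norm e))"
proof -
  have [measurable]: "C \<in> sets borel"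
    using C(2) by simp
  have "{u \<in> Omega C. u - h *\<^sub>R e \<notin> C} \<in> sets borel"
    unfolding Omega_def by measurable
  then have "of_nat N * emeasure sphere_measure {u \<in> Omega C. u - h *\<^sub>R e \<notin> C}
      \<le> of_nat DIM('a) * (of_nat N * emeasure lborel {x \<in> ball 0 1 \<inter> C. x - h *\<^sub>R e \<notin> C})"
    using normalize_preimage_boundary_layer_subset[OF C(1) e, of h] h
    by (auto simp: emeasure_sphere_measure mult.left_commute intro!: mult_left_mono emeasure_mono)
  also have "\<dots> \<le> of_nat DIM('a) * emeasure lborel (ball (0::'a) (1 + norm e))"
    using emeasure_cone_boundary_layer_le[OF C e h] by (rule mult_left_mono) simp
  finally show ?thesis .
qed

lemma emeasure_sphere_dyadic_layer_le:
  fixes C :: "'a::euclidean_space set"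
  assumes C: "convex_cone C" "closed C" and e: "e \<in> C"
  shows "emeasure sphere_measure {u \<in> Omega C. u - (1 / 2 ^ k) *\<^sub>R e \<notin> C}
    \<le> ennreal (1 / 2 ^ k) * (of_nat DIM('a) * emeasure lborel (ball (0::'a) (1 + norm e)))"
proof -
  have "ennreal (1 / 2 ^ k) * of_nat (2 ^ k) = 1"
    by (simp add: ennreal_of_nat_eq_real_of_nat ennreal_mult[symmetric])
  then have "emeasure sphere_measure {u \<in> Omega C. u - (1 / 2 ^ k) *\<^sub>R e \<notin> C}
      = ennreal (1 / 2 ^ k) * (of_nat (2 ^ k) * emeasure sphere_measure {u \<in> Omega C. u - (1 / 2 ^ k) *\<^sub>R e \<notin> C})"
    by (simp add: mult.assoc[symmetric])
  also have "\<dots> \<le> ennreal (1 / 2 ^ k) * (of_nat DIM('a) * emeasure lborel (ball (0::'a) (1 + norm e)))"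
    using emeasure_sphere_boundary_layer_le[OF C e, of "1 / 2 ^ k" "2 ^ k"] by (intro mult_left_mono) simp_all
  finally show ?thesis .
qed

lemma nn_integral_le_layers:
  fixes f :: "'a \<Rightarrow> ennreal" and b :: "nat \<Rightarrow> ennreal"
  assumes "A \<in> sets M" "\<And>k. W k \<in> sets M"
    and "\<And>u. u \<in> A \<Longrightarrow> f u \<le> a \<or> (\<exists>k. u \<in> W k \<and> f u \<le> b k)"
  shows "(\<integral>\<^sup>+u\<in>A. f u \<partial>M) \<le> a * emeasure M A + (\<Sum>k. b k * emeasure M (W k))"
proof -
  have "f u * indicator A u \<le> a * indicator A u + (\<Sum>k. b k * indicator (W k) u)" for u
  proof (cases "u \<in> A")
    case True
    then consider "f u \<le> a" | k where "u \<in> W k" "f u \<le> b k"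
      using assms(3) by blast
    then show ?thesis
    proof cases
      case 2
      then have "f u \<le> (\<Sum>k\<in>{k}. b k * indicator (W k) u)"
        by simp
      also have "\<dots> \<le> (\<Sum>k. b k * indicator (W k) u)"
        by (rule sum_le_suminf) auto
      finally show ?thesis
        using True by (simp add: add_increasing)
    qed (use True in \<open>simp add: add_increasing2\<close>)
  qed simp
  then have "(\<integral>\<^sup>+u\<in>A. f u \<partial>M)
      \<le> (\<integral>\<^sup>+u. a * indicator A u + (\<Sum>k. b k * indicator (W k) u) \<partial>M)"
    by (intro nn_integral_mono) simp
  also have "\<dots> = a * emeasure M A + (\<Sum>k. b k * emeasure M (W k))"
    using assms(1,2) by (simp add: nn_integral_add nn_integral_suminf nn_integral_cmult_indicator)
  finally show ?thesis .
qed

lemma radial_dyadic_bound: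
  assumes C: "convex_cone C" "e \<in> C" "u \<in> interior C" and "0 < c"
    and mem: "\<And>h. 0 < h \<Longrightarrow> u - h *\<^sub>R e \<in> C \<Longrightarrow> (c / h) *\<^sub>R u \<in> E"
  shows "radial E u \<le> c \<or> (\<exists>k. u - (1 / 2 ^ k) *\<^sub>R e \<notin> C \<and> radial E u \<le> c * 2 ^ Suc k)"
proof -
  have bound: "radial E u \<le> c / h" if "0 < h" "u - h *\<^sub>R e \<in> C" for h
    using radial_le[of "c / h" u E] mem[OF that] \<open>0 < c\<close> that(1) by simp
  define P where "P k \<longleftrightarrow> u - (1 / 2 ^ k) *\<^sub>R e \<in> C" for k :: nat
  obtain h where h: "h > 0" "u - h *\<^sub>R e \<in> C"
    using interior_diff_scaleR[OF C(3)] .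
  obtain k :: nat where "(1 / 2) ^ k < h"
    using real_arch_pow_inv[OF h(1), of "1 / 2"] by auto
  then have "P k"
    unfolding P_def using convex_cone_diff_scaleR_mono[OF C(1,2) h(2)] by (simp add: power_one_over)
  show ?thesis
  proof (cases "P 0")
    case True
    then show ?thesis
      using bound[of 1] by (simp add: P_def)
  next
    case False
    then obtain k where "\<not> P k" "P (Suc k)"
      using exists_least_lemma[of P] \<open>P k\<close> by blast
    then show ?thesis
      using bound[of "1 / 2 ^ Suc k"] by (auto simp: P_def)
  qed
qed

lemma summable_dyadic_powr:
  fixes r :: real
  assumes "r < 1"
  shows "summable (\<lambda>k::nat. (2 ^ k) powr r / 2 ^ k)"
proof -
  have "(2 ^ k) powr r / 2 ^ k = (2 powr (r - 1)) ^ k" for k :: nat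
    by (simp add: powr_realpow[symmetric] powr_powr powr_power powr_diff[symmetric] algebra_simps)
  moreover have "norm ((2::real) powr (r - 1)) < 1"
    using assms by (simp add: powr_less_one)
  ultimately show ?thesis
    using summable_geometric by simp
qed

lemma suminf_dyadic_powr_finite:
  fixes c r :: real
  assumes "0 < c" "r < 1"
  shows "(\<Sum>k. ennreal ((c * 2 ^ Suc k) powr r / 2 ^ k)) < \<infinity>"
proof -
  have "(\<lambda>k. (c * 2 ^ Suc k) powr r / 2 ^ k) = (\<lambda>k. (2 * c) powr r * ((2 ^ k) powr r / 2 ^ k))"
    using assms(1) by (simp add: powr_mult mult_ac)
  then have "summable (\<lambda>k. (c * 2 ^ Suc k) powr r / 2 ^ k)"
    using summable_mult[OF summable_dyadic_powr[OF assms(2)]] by simp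
  then show ?thesis
    by (simp add: ennreal_suminf_neq_top less_top)
qed

lemma nn_integral_radial_powr_finite_nonpos:
  fixes C E :: "'a::euclidean_space set"
  assumes E: "C_pseudo_cone C E" and C: "convex_cone C" and r: "r \<le> 0"
  shows "(\<integral>\<^sup>+u\<in>Omega C. ennreal (radial E u powr r) \<partial>sphere_measure) < \<infinity>"
proof -
  obtain d where d: "d > 0" "\<And>u. norm u = 1 \<Longrightarrow> \<exists>t>0. t *\<^sub>R u \<in> E \<Longrightarrow> d \<le> radial E u"
    using radial_lower_bound[of E] E by (auto simp: C_pseudo_cone_def)
  have "radial E u powr r \<le> d powr r" if "u \<in> Omega C" for u
    using that d r C_pseudo_cone_ray_meets[OF E C] by (intro powr_mono2') (auto simp: Omega_def)
  then have "(\<integral>\<^sup>+u\<in>Omega C. ennreal (radial E u powr r) \<partial>sphere_measure)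
      \<le> (\<integral>\<^sup>+u. ennreal (d powr r) * indicator (Omega C) u \<partial>sphere_measure)"
    by (intro nn_integral_mono) (simp add: ennreal_leI split: split_indicator)
  also have "\<dots> = ennreal (d powr r) * emeasure sphere_measure (Omega C)"
    using Omega_borel[of C] by (intro nn_integral_cmult_indicator) simp
  also have "\<dots> < \<infinity>"
    using finite_measure.emeasure_finite[OF finite_measure_sphere_measure, of "Omega C"]
    by (simp add: ennreal_mult_less_top less_top)
  finally show ?thesis .
qed

lemma nn_integral_radial_powr_finite_pos:
  fixes C E :: "'a::euclidean_space set"
  assumes E: "C_pseudo_cone C E" and C: "convex_cone C" "closed C" "interior C \<noteq> {}"
    and r: "0 \<le> r" "r < 1"
  shows "(\<integral>\<^sup>+u\<in>Omega C. ennreal (radial E u powr r) \<partial>sphere_measure) < \<infinity>"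
proof -
  obtain e where e: "e \<in> interior C"
    using C(3) by auto
  obtain c where c: "c > 0" "\<And>u h. 0 < h \<Longrightarrow> u - h *\<^sub>R e \<in> C \<Longrightarrow> (c / h) *\<^sub>R u \<in> E"
    using C_pseudo_cone_scaleR_mem[OF E C(1) e] by blast
  define W where "W k = {u \<in> Omega C. u - (1 / 2 ^ k) *\<^sub>R e \<notin> C}" for k :: nat
  define t where "t k = (c * 2 ^ Suc k) powr r" for k :: nat
  define K where "K = of_nat DIM('a) * emeasure lborel (ball (0::'a) (1 + norm e))"
  have [measurable]: "C \<in> sets borel"
    using C(2) by simp
  have W_borel: "W k \<in> sets borel" for k
    unfolding W_def Omega_def by measurable
  have "radial E u \<le> c \<or> (\<exists>k. u \<in> W k \<and> radial E u \<le> c * 2 ^ Suc k)" if "u \<in> Omega C" for u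
    using radial_dyadic_bound[OF C(1) interior_subset[THEN subsetD, OF e] _ c] that
    by (auto simp: W_def Omega_def)
  moreover have "0 \<le> radial E u" if "u \<in> Omega C" for u
    using that C_pseudo_cone_ray_meets[OF E C(1)] radial_nonneg by (auto simp: Omega_def)
  ultimately have "(\<integral>\<^sup>+u\<in>Omega C. ennreal (radial E u powr r) \<partial>sphere_measure)
      \<le> ennreal (c powr r) * emeasure sphere_measure (Omega C)
        + (\<Sum>k. ennreal (t k) * emeasure sphere_measure (W k))"
    using Omega_borel[of C] W_borel r
    by (intro nn_integral_le_layers) (auto simp: t_def intro!: ennreal_leI powr_mono2)
  also have "\<dots> \<le> ennreal (c powr r) * emeasure sphere_measure (Omega C)
        + (\<Sum>k. ennreal (t k / 2 ^ k)) * K"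
  proof -
    have layer: "ennreal (t k) * emeasure sphere_measure (W k) \<le> ennreal (t k / 2 ^ k) * K" for k
    proof -
      have "ennreal (t k) * emeasure sphere_measure (W k) \<le> ennreal (t k) * (ennreal (1 / 2 ^ k) * K)"
        unfolding W_def K_def
        using emeasure_sphere_dyadic_layer_le[OF C(1,2) interior_subset[THEN subsetD, OF e]]
        by (rule mult_left_mono) simp
      then show ?thesis
        by (simp add: t_def mult.assoc[symmetric] ennreal_mult[symmetric])
    qed
    have "(\<Sum>k. ennreal (t k) * emeasure sphere_measure (W k)) \<le> (\<Sum>k. ennreal (t k / 2 ^ k) * K)"
      by (intro suminf_le summableI layer)
    then show ?thesis
      by (simp add: add_left_mono)
  qed
  also have "\<dots> < \<infinity>"
  proof -
    have "K < \<infinity>"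
      unfolding K_def using emeasure_lborel_ball_finite[of "0::'a" "1 + norm e"]
      by (simp add: ennreal_mult_less_top of_nat_less_top)
    then show ?thesis
      using suminf_dyadic_powr_finite[OF c(1) r(2)]
        finite_measure.emeasure_finite[OF finite_measure_sphere_measure, of "Omega C"]
      by (simp add: t_def ennreal_mult_less_top less_top)
  qed
  finally show ?thesis .
qed

theorem corollary5p1:
  fixes C E :: "'a::euclidean_space set" and r :: real
  assumes "DIM('a) \<ge> 2"
    and "pointed_cc_cone C"
    and "C_pseudo_cone C E"
    and "r < 0 \<or> (0 < r \<and> r < 1)"
  shows "dual_volume C r E < \<infinity>"
proof -
  have C: "convex_cone C" "closed C" "interior C \<noteq> {}"
    using convex_cone_if_pointed_cc_cone[OF assms(2)] assms(2) by (simp_all add: pointed_cc_cone_def)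
  have "(\<integral>\<^sup>+u\<in>Omega C. ennreal (radial E u powr r) \<partial>sphere_measure) < \<infinity>"
    using assms(4)
  proof (elim disjE conjE)
    assume "r < 0"
    then show ?thesis
      by (intro nn_integral_radial_powr_finite_nonpos[OF assms(3) C(1)]) simp
  next
    assume "0 < r" "r < 1"
    then show ?thesis
      by (intro nn_integral_radial_powr_finite_pos[OF assms(3) C]) simp_all
  qed
  then show ?thesis
    unfolding dual_volume_def by (simp add: ennreal_mult_less_top)
qed

end
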